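(* Let $\Lambda=\{mz+nw : m,n\in\mathbb{Z}\}$ be a lattice in $\mathbb{C}$, where $z,w\in\mathbb{C}$ are linearly independent over $\mathbb{R}$. Let $r>0$ be such that $\{\zeta:|\zeta-z_1|<r\}\cap\{\zeta:|\zeta-z_2|<r\}=\emptyset$ for all distinct $z_1,z_2\in\Lambda$, and let $$D=\mathbb{C}\setminus\bigcup_{z_1\in\Lambda}\{\zeta:|\zeta-z_1|<r\}.$$ Then $bh(T(D))=\infty$, i.e. $E_a[T(D)^p]<\infty$ for every $p>0$.
   Context: Planar Brownian motion $B_t$ with $B_0=a$; $E_a$ the corresponding expectation. $T(D)=\inf\{t\geq0:B_t\notin D\}$. For a stopping time $\tau$, $bh(\tau)=\sup\{p>0:E_a[\tau^p]<\infty\}$. *)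

theory Defs
  imports "HOL-Probability.Probability"
begin

text \<open>Planar (complex-valued) Brownian motion started at a, on a probability space M:
  B_0 = a almost surely, almost surely continuous paths, increments B_t - B_s (s < t)
  are centred Gaussian with covariance (t - s) I (independent real and imaginary parts
  of variance t - s), and increments over consecutive intervals are independent.\<close>
definition planar_BM :: "'w measure \<Rightarrow> (real \<Rightarrow> 'w \<Rightarrow> complex) \<Rightarrow> complex \<Rightarrow> bool" where
  "planar_BM M B a \<longleftrightarrow>
     prob_space M \<and>
     (\<forall>t. B t \<in> borel_measurable M) \<and>
     (AE \<omega> in M. B 0 \<omega> = a) \<and>
     (AE \<omega> in M. continuous_on {0..} (\<lambda>t. B t \<omega>)) \<and>
     (\<forall>s t. 0 \<le> s \<and> s < t \<longrightarrow>
        distributed M lborel (\<lambda>\<omega>. B t \<omega> - B s \<omega>)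
          (\<lambda>x. ennreal (normal_density 0 (sqrt (t - s)) (Re x) *
                         normal_density 0 (sqrt (t - s)) (Im x)))) \<and>
     (\<forall>(n::nat) (ts::nat \<Rightarrow> real). 0 \<le> ts 0 \<and> mono ts \<longrightarrow>
        prob_space.indep_vars M (\<lambda>_. borel) (\<lambda>i \<omega>. B (ts (Suc i)) \<omega> - B (ts i) \<omega>) {..<n})"

text \<open>Exit time T(D) = inf {t \<ge> 0. B_t \<notin> D}, valued in [0, \<infinity>] (inf of empty set = \<infinity>).\<close>
definition exit_time :: "(real \<Rightarrow> 'w \<Rightarrow> complex) \<Rightarrow> complex set \<Rightarrow> 'w \<Rightarrow> ennreal" where
  "exit_time B D \<omega> = (INF t \<in> {t. 0 \<le> t \<and> B t \<omega> \<notin> D}. ennreal t)"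

text \<open>E[\<tau>^p] < \<infinity> for a [0,\<infinity>]-valued random time \<tau> (\<tau>^p = \<infinity> where \<tau> = \<infinity>).\<close>
definition finite_moment :: "'w measure \<Rightarrow> ('w \<Rightarrow> ennreal) \<Rightarrow> real \<Rightarrow> bool" where
  "finite_moment M \<tau> p \<longleftrightarrow>
     (AE \<omega> in M. \<tau> \<omega> < \<top>) \<and> (\<integral>\<^sup>+ \<omega>. ennreal (enn2real (\<tau> \<omega>) powr p) \<partial>M) < \<top>"

end

theory Submission
  imports Defs
begin

(* Look at the path only at integer times. Every point of the plane lies within |z| + |w| of a
   lattice point, hence of a removed disc of radius r. The unit-time increments are independent
   standard Gaussians, so whatever the current position, the path sits in such a disc at the next
   integer time with probability at least delta = r^2/2 exp (-(|z| + |w| + r)^2/2). Hence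
   P(T(D) > n) <= (1 - delta)^n, and a geometric tail gives moments of every order. *)

lemma Im_cnj_mult_neq_0_if_independent:
  fixes z w :: complex
  assumes indep: "\<forall>\<alpha> \<beta> :: real. \<alpha> *\<^sub>R z + \<beta> *\<^sub>R w = 0 \<longrightarrow> \<alpha> = 0 \<and> \<beta> = 0"
  shows "Im (cnj z * w) \<noteq> 0"
proof
  assume "Im (cnj z * w) = 0"
  then have "Re (cnj z * w) *\<^sub>R z + (- (cmod z)\<^sup>2) *\<^sub>R w = 0"
    unfolding cmod_power2 by (simp add: complex_eq_iff) algebra
  then have "- (cmod z)\<^sup>2 = 0"
    using indep by blast
  then show False
    using indep[rule_format, of 1 0] by simp
qed

lemma complex_coordinates:
  fixes z w x :: complex
  assumes "Im (cnj z * w) \<noteq> 0"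
  shows "x = (Im (cnj x * w) / Im (cnj z * w)) *\<^sub>R z + (Im (cnj z * x) / Im (cnj z * w)) *\<^sub>R w"
proof -
  have "x = inverse (Im (cnj z * w)) *\<^sub>R (Im (cnj z * w) *\<^sub>R x)"
    using assms by simp
  also have "Im (cnj z * w) *\<^sub>R x = Im (cnj x * w) *\<^sub>R z + Im (cnj z * x) *\<^sub>R w"
    by (simp add: complex_eq_iff algebra_simps)
  finally show ?thesis
    by (simp add: scaleR_add_right divide_inverse_commute)
qed

lemma lattice_point_near:
  fixes z w x :: complex
  assumes indep: "\<forall>\<alpha> \<beta> :: real. \<alpha> *\<^sub>R z + \<beta> *\<^sub>R w = 0 \<longrightarrow> \<alpha> = 0 \<and> \<beta> = 0"
  shows "\<exists>m n :: int. cmod (x - (of_int m * z + of_int n * w)) \<le> cmod z + cmod w"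
proof -
  obtain \<alpha> \<beta> :: real where x: "x = \<alpha> *\<^sub>R z + \<beta> *\<^sub>R w"
    using complex_coordinates[OF Im_cnj_mult_neq_0_if_independent[OF indep]] by blast
  have "x - (of_int \<lfloor>\<alpha>\<rfloor> * z + of_int \<lfloor>\<beta>\<rfloor> * w) = frac \<alpha> *\<^sub>R z + frac \<beta> *\<^sub>R w"
    by (simp add: x frac_def scaleR_conv_of_real algebra_simps)
  also have "cmod \<dots> \<le> frac \<alpha> * cmod z + frac \<beta> * cmod w"
    by (metis abs_of_nonneg frac_ge_0 norm_scaleR norm_triangle_ineq)
  also have "\<dots> \<le> cmod z + cmod w"
    by (intro add_mono mult_left_le_one_le) (auto simp: less_imp_le[OF frac_lt_1])
  finally show ?thesis by blast
qed

lemma normal_density_Re_Im: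
  "normal_density 0 1 (Re y) * normal_density 0 1 (Im y) = exp (- (cmod y)\<^sup>2 / 2) / (2 * pi)"
  by (simp add: normal_density_def cmod_power2 exp_add[symmetric] real_sqrt_mult[symmetric]
      field_simps)

lemma emeasure_lborel_ball_complex:
  assumes "0 \<le> r"
  shows "emeasure lborel (ball (c :: complex) r) = ennreal (pi * r\<^sup>2)"
  using emeasure_ball[OF assms, of c] unit_ball_vol_even[of 1] by simp

lemma (in prob_space) prob_std_complex_normal_ball_ge:
  assumes X: "distributed M lborel X
                (\<lambda>x. ennreal (normal_density 0 1 (Re x) * normal_density 0 1 (Im x)))"
    and c: "cmod c \<le> K" and r: "0 \<le> r"
  shows "r\<^sup>2 / 2 * exp (- (K + r)\<^sup>2 / 2) \<le> prob {\<omega> \<in> space M. X \<omega> \<in> ball c r}"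
proof -
  define m where "m = exp (- (K + r)\<^sup>2 / 2) / (2 * pi)"
  have density_ge: "m \<le> normal_density 0 1 (Re x) * normal_density 0 1 (Im x)"
    if "x \<in> ball c r" for x
  proof -
    have "cmod x \<le> K + r"
      using that c norm_triangle_ineq2[of x c] by (auto simp: dist_norm norm_minus_commute)
    then have "(cmod x)\<^sup>2 \<le> (K + r)\<^sup>2"
      by (intro power_mono) auto
    then show ?thesis
      unfolding m_def normal_density_Re_Im by (intro divide_right_mono) auto
  qed
  have "ennreal (r\<^sup>2 / 2 * exp (- (K + r)\<^sup>2 / 2)) = ennreal m * emeasure lborel (ball c r)"
    using r by (simp add: emeasure_lborel_ball_complex m_def ennreal_mult[symmetric])
  also have "\<dots> = (\<integral>\<^sup>+x. ennreal m * indicator (ball c r) x \<partial>lborel)"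
    by (simp add: nn_integral_cmult_indicator)
  also have "\<dots> \<le> (\<integral>\<^sup>+x. ennreal (normal_density 0 1 (Re x) * normal_density 0 1 (Im x))
                         * indicator (ball c r) x \<partial>lborel)"
    by (intro nn_integral_mono) (auto simp: indicator_def density_ge)
  also have "\<dots> = emeasure M (X -` ball c r \<inter> space M)"
    by (rule distributed_emeasure[OF X, symmetric]) simp
  also have "X -` ball c r \<inter> space M = {\<omega> \<in> space M. X \<omega> \<in> ball c r}"
    by auto
  finally show ?thesis
    by (simp add: emeasure_eq_measure ennreal_le_iff)
qed

lemma (in prob_space) prob_shifted_std_complex_normal_in_le:
  assumes X: "distributed M lborel X
                (\<lambda>x. ennreal (normal_density 0 1 (Re x) * normal_density 0 1 (Im x)))"
    and hole: "cmod (c - y) \<le> K" "ball c r \<inter> D = {}"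
    and r: "0 \<le> r" and D[measurable]: "D \<in> sets borel"
  shows "prob {\<omega> \<in> space M. y + X \<omega> \<in> D} \<le> 1 - r\<^sup>2 / 2 * exp (- (K + r)\<^sup>2 / 2)"
proof -
  have [measurable]: "X \<in> borel_measurable M"
    using distributed_measurable[OF X] by simp
  have "r\<^sup>2 / 2 * exp (- (K + r)\<^sup>2 / 2) \<le> prob {\<omega> \<in> space M. X \<omega> \<in> ball (c - y) r}"
    by (rule prob_std_complex_normal_ball_ge[OF X hole(1) r])
  also have "\<dots> \<le> prob {\<omega> \<in> space M. y + X \<omega> \<notin> D}"
    using hole(2) by (intro finite_measure_mono) (auto simp: dist_norm algebra_simps)
  also have "{\<omega> \<in> space M. y + X \<omega> \<notin> D} = space M - {\<omega> \<in> space M. y + X \<omega> \<in> D}"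
    by auto
  also have "prob \<dots> = 1 - prob {\<omega> \<in> space M. y + X \<omega> \<in> D}"
    by (intro prob_compl) measurable
  finally show ?thesis
    by simp
qed

lemma (in prob_space) indep_var_emeasure_le:
  assumes XY: "indep_var N X N' Y"
    and S: "S \<in> sets N" and Q: "Q \<in> sets (N \<Otimes>\<^sub>M N')"
    and section_le: "\<And>x. x \<in> S \<Longrightarrow> emeasure M {\<omega> \<in> space M. (x, Y \<omega>) \<in> Q} \<le> q"
  shows "emeasure M {\<omega> \<in> space M. X \<omega> \<in> S \<and> (X \<omega>, Y \<omega>) \<in> Q}
           \<le> q * emeasure M {\<omega> \<in> space M. X \<omega> \<in> S}"
proof -
  have X: "X \<in> measurable M N" and Y: "Y \<in> measurable M N'"
    and joint: "distr M N X \<Otimes>\<^sub>M distr M N' Y = distr M (N \<Otimes>\<^sub>M N') (\<lambda>\<omega>. (X \<omega>, Y \<omega>))"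
    using XY by (auto simp: indep_var_distribution_eq)
  interpret Y: prob_space "distr M N' Y"
    using Y by (rule prob_space_distr)
  define Q' where "Q' = Q \<inter> (S \<times> space N')"
  have Q': "Q' \<in> sets (N \<Otimes>\<^sub>M N')"
    unfolding Q'_def using S Q by auto
  have "{\<omega> \<in> space M. X \<omega> \<in> S \<and> (X \<omega>, Y \<omega>) \<in> Q} = (\<lambda>\<omega>. (X \<omega>, Y \<omega>)) -` Q' \<inter> space M"
    using Y by (auto simp: Q'_def measurable_space)
  then have "emeasure M {\<omega> \<in> space M. X \<omega> \<in> S \<and> (X \<omega>, Y \<omega>) \<in> Q}
      = emeasure (distr M N X \<Otimes>\<^sub>M distr M N' Y) Q'"
    using X Y Q' by (simp add: joint emeasure_distr)
  also have "\<dots> = (\<integral>\<^sup>+x. emeasure (distr M N' Y) (Pair x -` Q') \<partial>distr M N X)"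
    using Q' by (intro Y.emeasure_pair_measure_alt) simp
  also have "\<dots> \<le> (\<integral>\<^sup>+x. q * indicator S x \<partial>distr M N X)"
  proof (intro nn_integral_mono)
    fix x
    show "emeasure (distr M N' Y) (Pair x -` Q') \<le> q * indicator S x"
    proof (cases "x \<in> S")
      case True
      have Q_x: "Pair x -` Q \<in> sets N'"
        using Q by (rule sets_Pair1)
      then have "Pair x -` Q' = Pair x -` Q"
        using True sets.sets_into_space by (auto simp: Q'_def)
      then have "emeasure (distr M N' Y) (Pair x -` Q') = emeasure M (Y -` Pair x -` Q \<inter> space M)"
        using Y Q_x by (simp add: emeasure_distr)
      also have "Y -` Pair x -` Q \<inter> space M = {\<omega> \<in> space M. (x, Y \<omega>) \<in> Q}"
        by auto
      finally show ?thesis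
        using True section_le by simp
    qed (simp add: Q'_def)
  qed
  also have "\<dots> = q * emeasure M {\<omega> \<in> space M. X \<omega> \<in> S}"
    using X S by (simp add: nn_integral_cmult_indicator emeasure_distr vimage_def Int_def conj_commute)
  finally show ?thesis .
qed

lemma (in prob_space) random_walk_stays_in_Suc_le:
  fixes \<Delta> :: "nat \<Rightarrow> 'a \<Rightarrow> 'b :: euclidean_space"
  assumes indep: "indep_vars (\<lambda>_. borel) \<Delta> {..<Suc n}"
    and D[measurable]: "D \<in> sets borel"
    and step: "\<And>y. emeasure M {\<omega> \<in> space M. y + \<Delta> n \<omega> \<in> D} \<le> q"
  shows "emeasure M {\<omega> \<in> space M. \<forall>k<Suc n. a + (\<Sum>i\<le>k. \<Delta> i \<omega>) \<in> D}
           \<le> q * emeasure M {\<omega> \<in> space M. \<forall>k<n. a + (\<Sum>i\<le>k. \<Delta> i \<omega>) \<in> D}"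
proof -
  have [measurable]: "\<Delta> i \<in> borel_measurable M" if "i < Suc n" for i
    using indep that by (simp add: indep_vars_def2)
  define P where "P = (\<Pi>\<^sub>M i\<in>{..<n}. (borel :: 'b measure))"
  define P' where "P' = (\<Pi>\<^sub>M i\<in>{n}. (borel :: 'b measure))"
  define V where "V \<omega> = restrict (\<lambda>i. \<Delta> i \<omega>) {..<n}" for \<omega>
  define W where "W \<omega> = restrict (\<lambda>i. \<Delta> i \<omega>) {n}" for \<omega>
  have V_W: "indep_var P V P' W"
    unfolding P_def P'_def V_def W_def by (rule indep_var_restrict[OF indep]) auto
  define S where "S = {v \<in> space P. \<forall>k<n. a + (\<Sum>i\<le>k. v i) \<in> D}"
  define Q where "Q = {x \<in> space (P \<Otimes>\<^sub>M P'). a + (\<Sum>i<n. fst x i) + snd x n \<in> D}"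
  have S: "S \<in> sets P"
    unfolding S_def P_def by measurable
  have "(\<lambda>x. a + (\<Sum>i<n. fst x i) + snd x n) \<in> borel_measurable (P \<Otimes>\<^sub>M P')"
    unfolding P_def P'_def by measurable
  then have Q: "Q \<in> sets (P \<Otimes>\<^sub>M P')"
    unfolding Q_def by measurable
  have V_S: "V \<omega> \<in> S \<longleftrightarrow> (\<forall>k<n. a + (\<Sum>i\<le>k. \<Delta> i \<omega>) \<in> D)" for \<omega>
    by (auto simp: S_def P_def V_def space_PiM)
  have "V \<omega> \<in> S \<and> (V \<omega>, W \<omega>) \<in> Q \<longleftrightarrow> (\<forall>k<Suc n. a + (\<Sum>i\<le>k. \<Delta> i \<omega>) \<in> D)" for \<omega>
    by (auto simp: V_S Q_def S_def P_def P'_def V_def W_def space_pair_measure space_PiM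
        less_Suc_eq lessThan_Suc_atMost[symmetric] add.assoc)
  then have "emeasure M {\<omega> \<in> space M. \<forall>k<Suc n. a + (\<Sum>i\<le>k. \<Delta> i \<omega>) \<in> D}
      = emeasure M {\<omega> \<in> space M. V \<omega> \<in> S \<and> (V \<omega>, W \<omega>) \<in> Q}"
    by simp
  also have "\<dots> \<le> q * emeasure M {\<omega> \<in> space M. V \<omega> \<in> S}"
  proof (rule indep_var_emeasure_le[OF V_W S Q])
    fix v assume "v \<in> S"
    then have "{\<omega> \<in> space M. (v, W \<omega>) \<in> Q} = {\<omega> \<in> space M. (a + (\<Sum>i<n. v i)) + \<Delta> n \<omega> \<in> D}"
      by (auto simp: Q_def S_def P'_def W_def space_pair_measure space_PiM)
    then show "emeasure M {\<omega> \<in> space M. (v, W \<omega>) \<in> Q} \<le> q"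
      by (simp add: step)
  qed
  finally show ?thesis
    by (simp add: V_S)
qed

lemma (in prob_space) random_walk_stays_in_le_power:
  fixes \<Delta> :: "nat \<Rightarrow> 'a \<Rightarrow> 'b :: euclidean_space"
  assumes indep: "\<And>n. indep_vars (\<lambda>_. borel) \<Delta> {..<n}"
    and D: "D \<in> sets borel" and q: "0 \<le> q"
    and step: "\<And>y i. emeasure M {\<omega> \<in> space M. y + \<Delta> i \<omega> \<in> D} \<le> ennreal q"
  shows "emeasure M {\<omega> \<in> space M. \<forall>k<n. a + (\<Sum>i\<le>k. \<Delta> i \<omega>) \<in> D} \<le> ennreal (q ^ n)"
proof (induction n)
  case 0
  show ?case
    by (simp add: emeasure_space_1)
next
  case (Suc n)
  have "emeasure M {\<omega> \<in> space M. \<forall>k<Suc n. a + (\<Sum>i\<le>k. \<Delta> i \<omega>) \<in> D}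
      \<le> ennreal q * emeasure M {\<omega> \<in> space M. \<forall>k<n. a + (\<Sum>i\<le>k. \<Delta> i \<omega>) \<in> D}"
    by (rule random_walk_stays_in_Suc_le[OF indep D step])
  also have "\<dots> \<le> ennreal q * ennreal (q ^ n)"
    using Suc.IH by (rule mult_left_mono) simp
  finally show ?case
    using q by (simp add: ennreal_mult[symmetric] mult.commute)
qed

lemma summable_powr_mult_geometric:
  fixes p q :: real
  assumes "0 \<le> q" "q < 1"
  shows "summable (\<lambda>n. (real n + 1) powr p * q ^ n)"
proof -
  have "(\<lambda>n. 1 + 1 / real (Suc n)) \<longlonglongrightarrow> 1 + 0"
    by (intro tendsto_add tendsto_const LIMSEQ_Suc[OF lim_1_over_n])
  then have "(\<lambda>n. (real n + 2) / (real n + 1)) \<longlonglongrightarrow> 1"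
    by (simp add: field_simps)
  then have "(\<lambda>n. q * ((real n + 2) / (real n + 1)) powr p) \<longlonglongrightarrow> q * 1 powr p"
    by (intro tendsto_intros) auto
  moreover have "q < (1 + q) / 2" using assms by simp
  ultimately have "eventually (\<lambda>n. q * ((real n + 2) / (real n + 1)) powr p < (1 + q) / 2) sequentially"
    by (intro order_tendstoD) auto
  then obtain N where N: "\<And>n. n \<ge> N \<Longrightarrow> q * ((real n + 2) / (real n + 1)) powr p < (1 + q) / 2"
    by (auto simp: eventually_at_top_linorder)
  show ?thesis
  proof (rule summable_ratio_test[of "(1 + q) / 2" N])
    show "(1 + q) / 2 < 1" using assms by simp
    fix n assume "N \<le> n"
    have "(real (Suc n) + 1) powr p * q ^ Suc n
        = q * ((real n + 2) / (real n + 1)) powr p * ((real n + 1) powr p * q ^ n)"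
      by (simp add: powr_divide field_simps)
    also have "\<dots> \<le> (1 + q) / 2 * ((real n + 1) powr p * q ^ n)"
      using N[OF \<open>N \<le> n\<close>] assms by (intro mult_right_mono) auto
    finally show "norm ((real (Suc n) + 1) powr p * q ^ Suc n)
                  \<le> (1 + q) / 2 * norm ((real n + 1) powr p * q ^ n)"
      using assms by simp
  qed
qed

lemma exists_nat_less_le_Suc:
  fixes t :: real
  assumes "0 < t"
  shows "\<exists>N::nat. real N < t \<and> t \<le> real N + 1"
  using assms by (intro exI[of _ "nat (\<lceil>t\<rceil> - 1)"]) (auto, linarith+)

lemma enn2real_powr_le_suminf_indicator:
  fixes T :: ennreal
  assumes tail: "\<forall>n. of_nat n < T \<longrightarrow> x \<in> A n" and p: "0 \<le> p"
  shows "ennreal (enn2real T powr p) \<le> (\<Sum>n. ennreal ((real n + 1) powr p) * indicator (A n) x)"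
proof (cases "enn2real T = 0")
  case False
  then have t: "0 < enn2real T" and T: "T = ennreal (enn2real T)"
    using enn2real_nonneg[of T] by (auto simp: less_le enn2real_eq_0_iff)
  obtain N :: nat where N: "real N < enn2real T" "enn2real T \<le> real N + 1"
    using exists_nat_less_le_Suc[OF t] by blast
  have "of_nat N < T"
    using N(1) by (subst T) (simp add: ennreal_of_nat_eq_real_of_nat ennreal_lessI)
  then have "x \<in> A N"
    using tail by blast
  have "ennreal (enn2real T powr p) \<le> ennreal ((real N + 1) powr p)"
    using N t p by (intro ennreal_leI powr_mono2) auto
  also have "\<dots> = (\<Sum>n\<in>{N}. ennreal ((real n + 1) powr p) * indicator (A n) x)"
    using \<open>x \<in> A N\<close> by simp
  also have "\<dots> \<le> (\<Sum>n. ennreal ((real n + 1) powr p) * indicator (A n) x)"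
    by (rule sum_le_suminf) auto
  finally show ?thesis .
qed simp

lemma (in prob_space) AE_less_top_if_geometric_tail:
  fixes T :: "'a \<Rightarrow> ennreal"
  assumes A: "\<And>n. A n \<in> events" and A_le: "\<And>n. emeasure M (A n) \<le> ennreal (q ^ n)"
    and q: "0 \<le> q" "q < 1"
    and tail: "AE x in M. \<forall>n. of_nat n < T x \<longrightarrow> x \<in> A n"
  shows "AE x in M. T x < \<top>"
proof -
  have "emeasure M (\<Inter>n. A n) \<le> ennreal (q ^ n)" for n
    using A_le[of n] A by (meson INT_lower UNIV_I emeasure_mono order_trans sets.sets_into_space)
  moreover have "(\<lambda>n. ennreal (q ^ n)) \<longlonglongrightarrow> ennreal 0"
    using q by (intro tendsto_ennrealI LIMSEQ_realpow_zero)
  ultimately have "emeasure M (\<Inter>n. A n) \<le> 0"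
    by (intro tendsto_lowerbound[OF _ always_eventually]) (auto simp: trivial_limit_sequentially)
  then have "(\<Inter>n. A n) \<in> null_sets M"
    using A by (auto intro: null_setsI)
  with tail show ?thesis
  proof (rule eventually_elim2[OF _ AE_not_in])
    fix x assume x_tail: "\<forall>n. of_nat n < T x \<longrightarrow> x \<in> A n" and "x \<notin> (\<Inter>n. A n)"
    then obtain n where "x \<notin> A n"
      by blast
    with x_tail have "T x \<le> of_nat n"
      by (meson not_le)
    then show "T x < \<top>"
      using of_nat_less_top by (rule le_less_trans)
  qed
qed

lemma (in prob_space) finite_moment_if_geometric_tail:
  fixes T :: "'a \<Rightarrow> ennreal"
  assumes A: "\<And>n. A n \<in> events" and A_le: "\<And>n. emeasure M (A n) \<le> ennreal (q ^ n)"
    and q: "0 \<le> q" "q < 1"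
    and tail: "AE x in M. \<forall>n. of_nat n < T x \<longrightarrow> x \<in> A n"
    and p: "0 \<le> p"
  shows "finite_moment M T p"
proof -
  have "(\<integral>\<^sup>+x. ennreal (enn2real (T x) powr p) \<partial>M)
      \<le> (\<integral>\<^sup>+x. (\<Sum>n. ennreal ((real n + 1) powr p) * indicator (A n) x) \<partial>M)"
    using tail by (intro nn_integral_mono_AE) (auto elim!: eventually_mono
        intro: enn2real_powr_le_suminf_indicator[OF _ p])
  also have "\<dots> = (\<Sum>n. ennreal ((real n + 1) powr p) * emeasure M (A n))"
    using A by (simp add: nn_integral_suminf nn_integral_cmult_indicator)
  also have "\<dots> \<le> (\<Sum>n. ennreal ((real n + 1) powr p * q ^ n))"
    using A_le q by (intro suminf_le) (auto simp: ennreal_mult intro!: mult_left_mono)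
  also have "\<dots> = ennreal (\<Sum>n. (real n + 1) powr p * q ^ n)"
    using summable_powr_mult_geometric[OF q] q by (intro suminf_ennreal2) auto
  also have "\<dots> < \<top>"
    by simp
  finally show ?thesis
    using AE_less_top_if_geometric_tail[OF A A_le q tail] by (simp add: finite_moment_def)
qed

lemma exit_time_le:
  assumes "0 \<le> t" "B t \<omega> \<notin> D"
  shows "exit_time B D \<omega> \<le> ennreal t"
  unfolding exit_time_def using assms by (intro INF_lower) simp

lemma exit_time_gt_imp_skeleton_in:
  assumes B0: "B 0 \<omega> = a" and T: "of_nat n < exit_time B D \<omega>"
  shows "\<forall>k<n. a + (\<Sum>i\<le>k. B (real (Suc i)) \<omega> - B (real i) \<omega>) \<in> D"
proof (intro allI impI)
  fix k assume "k < n"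
  have "a + (\<Sum>i\<le>k. B (real (Suc i)) \<omega> - B (real i) \<omega>) = B (real (Suc k)) \<omega>"
    using B0 sum_lessThan_telescope[of "\<lambda>i. B (real i) \<omega>" "Suc k"]
    by (simp add: lessThan_Suc_atMost)
  moreover have "\<not> exit_time B D \<omega> \<le> ennreal (real (Suc k))"
  proof
    assume "exit_time B D \<omega> \<le> ennreal (real (Suc k))"
    also have "\<dots> \<le> of_nat n"
      using \<open>k < n\<close> by (simp add: ennreal_of_nat_eq_real_of_nat[symmetric] del: of_nat_Suc)
    finally show False
      using T by simp
  qed
  ultimately show "a + (\<Sum>i\<le>k. B (real (Suc i)) \<omega> - B (real i) \<omega>) \<in> D"
    using exit_time_le[of "real (Suc k)" B \<omega> D] by auto
qed

lemma planar_BM_unit_increment_normal: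
  assumes "planar_BM M B a"
  shows "distributed M lborel (\<lambda>\<omega>. B (real (Suc i)) \<omega> - B (real i) \<omega>)
           (\<lambda>x. ennreal (normal_density 0 1 (Re x) * normal_density 0 1 (Im x)))"
proof -
  have "\<forall>s t. 0 \<le> s \<and> s < t \<longrightarrow> distributed M lborel (\<lambda>\<omega>. B t \<omega> - B s \<omega>)
          (\<lambda>x. ennreal (normal_density 0 (sqrt (t - s)) (Re x) * normal_density 0 (sqrt (t - s)) (Im x)))"
    using assms by (simp add: planar_BM_def)
  from this[rule_format, of "real i" "real (Suc i)"] show ?thesis
    by simp
qed

lemma planar_BM_unit_increments_indep:
  assumes "planar_BM M B a"
  shows "prob_space.indep_vars M (\<lambda>_. borel) (\<lambda>i \<omega>. B (real (Suc i)) \<omega> - B (real i) \<omega>) {..<n}"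
proof -
  have "\<forall>n ts. 0 \<le> ts 0 \<and> mono ts \<longrightarrow>
          prob_space.indep_vars M (\<lambda>_. borel) (\<lambda>i \<omega>. B (ts (Suc i)) \<omega> - B (ts i) \<omega>) {..<n}"
    using assms by (simp add: planar_BM_def)
  from this[rule_format, of real n] show ?thesis
    by (simp add: mono_def)
qed

lemma planar_BM_finite_moment_exit_time:
  assumes BM: "planar_BM M B a" and D[measurable]: "D \<in> sets borel"
    and holes: "\<And>y. \<exists>c. cmod (c - y) \<le> K \<and> ball c r \<inter> D = {}"
    and r: "0 < r" and p: "0 \<le> p"
  shows "finite_moment M (exit_time B D) p"
proof -
  interpret prob_space M
    using BM by (simp add: planar_BM_def)
  have [measurable]: "\<And>t. B t \<in> borel_measurable M" and B0: "AE \<omega> in M. B 0 \<omega> = a"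
    using BM by (simp_all add: planar_BM_def)
  define \<Delta> where "\<Delta> i \<omega> = B (real (Suc i)) \<omega> - B (real i) \<omega>" for i \<omega>
  define q where "q = 1 - r\<^sup>2 / 2 * exp (- (K + r)\<^sup>2 / 2)"
  have step: "prob {\<omega> \<in> space M. y + \<Delta> i \<omega> \<in> D} \<le> q" for y i
  proof -
    obtain c where c: "cmod (c - y) \<le> K" "ball c r \<inter> D = {}"
      using holes by blast
    show ?thesis
      unfolding q_def \<Delta>_def using r
      by (intro prob_shifted_std_complex_normal_in_le[OF planar_BM_unit_increment_normal[OF BM] c _ D])
        simp
  qed
  have q: "0 \<le> q" "q < 1"
    using order_trans[OF measure_nonneg step] r by (auto simp: q_def)
  define A where "A n = {\<omega> \<in> space M. \<forall>k<n. a + (\<Sum>i\<le>k. \<Delta> i \<omega>) \<in> D}" for n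
  have A_events: "A n \<in> events" for n
    unfolding A_def \<Delta>_def by measurable
  have A_le: "emeasure M (A n) \<le> ennreal (q ^ n)" for n
    unfolding A_def using planar_BM_unit_increments_indep[OF BM] step q(1)
    by (intro random_walk_stays_in_le_power) (simp_all add: \<Delta>_def emeasure_eq_measure)
  have tail: "AE \<omega> in M. \<forall>n. of_nat n < exit_time B D \<omega> \<longrightarrow> \<omega> \<in> A n"
    using B0 AE_space
  proof eventually_elim
    case (elim \<omega>)
    then show ?case
      using exit_time_gt_imp_skeleton_in[of B \<omega> a] by (auto simp: A_def \<Delta>_def)
  qed
  show ?thesis
    by (rule finite_moment_if_geometric_tail[OF A_events A_le q tail p])
qed

theorem theorem4p1:
  fixes z w :: complex and r :: real and a :: complex
    and M :: "'w measure" and B :: "real \<Rightarrow> 'w \<Rightarrow> complex"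
    and \<Lambda> D :: "complex set"
  assumes indep: "\<forall>\<alpha> \<beta> :: real. \<alpha> *\<^sub>R z + \<beta> *\<^sub>R w = 0 \<longrightarrow> \<alpha> = 0 \<and> \<beta> = 0"
    and Lambda_def: "\<Lambda> = {of_int m * z + of_int n * w | m n. True}"
    and r_pos: "r > 0"
    and disj: "\<forall>z1\<in>\<Lambda>. \<forall>z2\<in>\<Lambda>. z1 \<noteq> z2 \<longrightarrow> ball z1 r \<inter> ball z2 r = {}"
    and D_def: "D = - (\<Union>z1\<in>\<Lambda>. ball z1 r)"
    and BM: "planar_BM M B a"
  shows "\<forall>p > 0. finite_moment M (exit_time B D) p"
proof -
  have D_borel: "D \<in> sets borel"
    unfolding D_def by (intro borel_closed closed_Compl open_UN) auto
  have holes: "\<exists>c. cmod (c - y) \<le> cmod z + cmod w \<and> ball c r \<inter> D = {}" for y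
    using lattice_point_near[OF indep, of y] unfolding D_def Lambda_def
    by (force simp: norm_minus_commute)
  show ?thesis
    by (intro allI impI planar_BM_finite_moment_exit_time[OF BM D_borel holes r_pos]) simp
qed

end
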